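(* Assume the $abc$-conjecture. Let $k \ge 3$ be an integer and $\epsilon>0$. Then there is a constant $C_{k,\epsilon}>0$ such that for all real $x \ge 1$ and all real $y$ with $1 \le y \le x$, \[ Q_k(x+y) - Q_k(x) \le C_{k,\epsilon}\, y^{(2+\epsilon)/k}. \]
   Context: A positive integer $n$ is $k$-full if every prime $p$ dividing $n$ satisfies $p^k \mid n$. $Q_k(x)$ denotes the number of $k$-full positive integers $n \le x$. For a nonzero integer $m$, $\kappa(m)=\prod_{p\mid m} p$ is the product of the distinct primes dividing $m$. The $abc$-conjecture is the statement: for every $\epsilon>0$ there is a constant $C_\epsilon>0$ such that for all integers $a,b,c$ with $a+b=c$ and $\gcd(a,b)=1$, one has $\max\{|a|,|b|,|c|\} \le C_\epsilon\, \kappa(abc)^{1+\epsilon}$. *)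

theory Defs
  imports "HOL-Analysis.Analysis" "HOL-Computational_Algebra.Primes"
begin

definition k_full :: "nat \<Rightarrow> nat \<Rightarrow> bool" where
  "k_full k n \<longleftrightarrow> (\<forall>p. prime p \<and> p dvd n \<longrightarrow> p ^ k dvd n)"

definition Q :: "nat \<Rightarrow> real \<Rightarrow> nat" where
  "Q k x = card {n::nat. 0 < n \<and> real n \<le> x \<and> k_full k n}"

definition kappa :: "int \<Rightarrow> int" where
  "kappa m = (\<Prod>p\<in>prime_factors m. p)"

definition abc_conjecture :: bool where
  "abc_conjecture \<longleftrightarrow>
     (\<forall>\<epsilon>::real. \<epsilon> > 0 \<longrightarrow> (\<exists>C::real. C > 0 \<and>
       (\<forall>a b c :: int. a + b = c \<and> coprime a b \<and> a * b * c \<noteq> 0 \<longrightarrow>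
          real_of_int (max \<bar>a\<bar> (max \<bar>b\<bar> \<bar>c\<bar>)) \<le> C * real_of_int (kappa (a * b * c)) powr (1 + \<epsilon>))))"

end

theory Submission
  imports Defs
begin

text \<open>Any two k-full numbers a < b have radicals at most b^(1/k), so the abc-conjecture
applied to the coprime triple (a, b - a, b) divided by gcd a b gives
b \<lesssim> (b^(2/k) (b - a))^(1+e), i.e. b - a \<gtrsim> b^(1/(1+e) - 2/k). Thus k-full numbers in (x, x + y]
are spaced at least about x^\<theta> \<ge> y^\<theta> apart, and there are at most about y^(1-\<theta>) of them; for small e
and k \<ge> 3 the exponent 1 - \<theta> is at most (2 + \<epsilon>)/k.\<close>

lemma kappa_pos: "kappa m > 0"
  unfolding kappa_def by (intro prod_pos) (auto dest: prime_factors_gt_0_int)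

lemma kappa_mult_le:
  assumes "m \<noteq> 0" "n \<noteq> 0"
  shows "kappa (m * n) \<le> kappa m * kappa n"
proof -
  have "kappa (m * n) = (\<Prod>p\<in>prime_factors m \<union> prime_factors n. p)"
    unfolding kappa_def using assms by (simp add: prime_factors_product)
  also have "\<dots> * (\<Prod>p\<in>prime_factors m \<inter> prime_factors n. p) = kappa m * kappa n"
    unfolding kappa_def by (rule prod.union_inter) auto
  finally have eq: "kappa (m * n) * (\<Prod>p\<in>prime_factors m \<inter> prime_factors n. p) = kappa m * kappa n" .
  have "(\<Prod>p\<in>prime_factors m \<inter> prime_factors n. p) \<ge> 1"
    by (intro prod_ge_1) (auto dest: prime_factors_gt_0_int)
  then show ?thesis
    using eq kappa_pos[of "m * n"] by (metis mult_le_cancel_left1 order_less_imp_not_less)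
qed

lemma kappa_le_of_dvd:
  assumes "m dvd n" "n \<noteq> 0"
  shows "kappa m \<le> kappa n"
proof -
  have sub: "prime_factors m \<subseteq> prime_factors n"
    using assms by (rule dvd_prime_factors[rotated])
  have "kappa n = (\<Prod>p\<in>prime_factors n - prime_factors m. p) * kappa m"
    unfolding kappa_def by (rule prod.subset_diff[OF sub]) auto
  moreover have "(\<Prod>p\<in>prime_factors n - prime_factors m. p) \<ge> 1"
    by (intro prod_ge_1) (auto dest: prime_factors_gt_0_int)
  ultimately show ?thesis
    using kappa_pos[of m] by (simp add: mult_le_cancel_right1)
qed

lemma kappa_power_le:
  assumes "m \<noteq> 0" "\<And>p. p \<in> prime_factors m \<Longrightarrow> j \<le> multiplicity p m"
  shows "kappa m ^ j \<le> \<bar>m\<bar>"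
proof -
  have "kappa m ^ j = (\<Prod>p\<in>prime_factors m. p ^ j)"
    unfolding kappa_def by (simp add: prod_power_distrib)
  also have "\<dots> \<le> (\<Prod>p\<in>prime_factors m. p ^ multiplicity p m)"
  proof (intro prod_mono conjI)
    fix p assume p: "p \<in> prime_factors m"
    then have "p > 0" by (rule prime_factors_gt_0_int)
    then show "0 \<le> p ^ j" by simp
    show "p ^ j \<le> p ^ multiplicity p m"
      using \<open>p > 0\<close> assms(2)[OF p] by (intro power_increasing) auto
  qed
  also have "\<dots> = \<bar>m\<bar>"
    using prod_prime_factors[OF assms(1)] by simp
  finally show ?thesis .
qed

lemma kappa_le_abs:
  assumes "m \<noteq> 0"
  shows "kappa m \<le> \<bar>m\<bar>"
  using kappa_power_le[OF assms, of 1] by (simp add: prime_factors_multiplicity Suc_le_eq)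

lemma kappa_power_le_of_k_full:
  assumes "k_full k n" "n > 0"
  shows "kappa (int n) ^ k \<le> int n"
proof -
  have "kappa (int n) ^ k \<le> \<bar>int n\<bar>"
  proof (rule kappa_power_le)
    fix p assume p: "p \<in> prime_factors (int n)"
    then have "prime p" "p dvd int n" "p > 0"
      by (auto simp: in_prime_factors_iff prime_gt_0_int)
    then have "prime (nat p)" "nat p dvd n"
      by (metis int_nat_eq less_le prime_nat_iff_prime, simp add: nat_dvd_iff)
    then have "nat p ^ k dvd n"
      using assms(1) unfolding k_full_def by blast
    then have "p ^ k dvd int n"
      using \<open>p > 0\<close> by (metis int_dvd_int_iff int_nat_eq less_le of_nat_power)
    then show "k \<le> multiplicity p (int n)"
      using assms(2) \<open>prime p\<close> by (intro multiplicity_geI) auto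
  qed (use assms in auto)
  then show ?thesis by simp
qed

lemma kappa_le_root_of_k_full:
  assumes "k_full k n" "n > 0" "k \<ge> 1"
  shows "real_of_int (kappa (int n)) \<le> real n powr (1 / real k)"
proof -
  let ?r = "real_of_int (kappa (int n))"
  have pow_le: "?r ^ k \<le> real n"
    using kappa_power_le_of_k_full[OF assms(1,2)] by (metis of_int_le_iff of_int_of_nat_eq of_int_power)
  have "?r = (?r ^ k) powr (1 / real k)"
    using kappa_pos[of "int n"] assms(3) by (simp add: powr_realpow[symmetric] powr_powr)
  also have "\<dots> \<le> real n powr (1 / real k)"
    using pow_le kappa_pos[of "int n"] by (intro powr_mono2) auto
  finally show ?thesis .
qed

definition abc_inequality :: "real \<Rightarrow> real \<Rightarrow> bool" where
  "abc_inequality C e \<longleftrightarrow>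
     (\<forall>a b c :: int. a + b = c \<and> coprime a b \<and> a * b * c \<noteq> 0 \<longrightarrow>
        real_of_int (max \<bar>a\<bar> (max \<bar>b\<bar> \<bar>c\<bar>)) \<le> C * real_of_int (kappa (a * b * c)) powr (1 + e))"

lemma abc_conjecture_iff: "abc_conjecture \<longleftrightarrow> (\<forall>e>0. \<exists>C>0. abc_inequality C e)"
  unfolding abc_conjecture_def abc_inequality_def by blast

lemma abc_inequality_coprime_gap:
  fixes a b :: int
  assumes abc: "abc_inequality C e" and "C > 0" "e \<ge> 0" "coprime a b" "0 < a" "a < b"
  shows "real_of_int b \<le> C * real_of_int (kappa a * kappa b * (b - a)) powr (1 + e)"
proof -
  have "coprime a (b - a)"
    using \<open>coprime a b\<close> coprime_imp_coprime zdvd_zdiffD by blast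
  moreover have "a + (b - a) = b \<and> coprime a (b - a) \<and> a * (b - a) * b \<noteq> 0 \<longrightarrow>
    real_of_int (max \<bar>a\<bar> (max \<bar>b - a\<bar> \<bar>b\<bar>)) \<le> C * real_of_int (kappa (a * (b - a) * b)) powr (1 + e)"
    using abc unfolding abc_inequality_def by blast
  ultimately have b_le: "real_of_int b \<le> C * real_of_int (kappa (a * (b - a) * b)) powr (1 + e)"
    using assms by simp
  have "kappa (a * (b - a) * b) \<le> kappa (a * (b - a)) * kappa b"
    using assms by (intro kappa_mult_le) auto
  also have "\<dots> \<le> kappa a * kappa (b - a) * kappa b"
    using assms kappa_pos[of b] by (intro mult_right_mono kappa_mult_le) auto
  also have "\<dots> \<le> kappa a * (b - a) * kappa b"
    using kappa_le_abs[of "b - a"] kappa_pos[of a] kappa_pos[of b] assms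
    by (intro mult_right_mono mult_left_mono) auto
  also have "\<dots> = kappa a * kappa b * (b - a)"
    by (simp add: mult_ac)
  finally have "real_of_int (kappa (a * (b - a) * b)) \<le> real_of_int (kappa a * kappa b * (b - a))"
    by linarith
  then have "real_of_int (kappa (a * (b - a) * b)) powr (1 + e)
      \<le> real_of_int (kappa a * kappa b * (b - a)) powr (1 + e)"
    using kappa_pos[of "a * (b - a) * b"] \<open>e \<ge> 0\<close> by (intro powr_mono2) simp_all
  then show ?thesis
    using b_le \<open>C > 0\<close> by (meson mult_left_mono order_trans less_imp_le)
qed

text \<open>Dividing by g = gcd a b costs nothing: the radicals only shrink, g \<le> g^(1+e), and g (B - A) = b - a.\<close>

lemma abc_inequality_gap:
  fixes a b :: int
  assumes abc: "abc_inequality C e" and "C > 0" "e \<ge> 0" "0 < a" "a < b"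
  shows "real_of_int b \<le> C * real_of_int (kappa a * kappa b * (b - a)) powr (1 + e)"
proof -
  define g where "g = gcd a b"
  define A where "A = a div g"
  define B where "B = b div g"
  define K where "K = real_of_int (kappa a * kappa b * (B - A))"
  have "g > 0"
    using assms unfolding g_def by simp
  have a_eq: "a = g * A" and b_eq: "b = g * B"
    unfolding A_def B_def g_def by simp_all
  have "A > 0" "A < B"
    using a_eq b_eq \<open>g > 0\<close> assms by (auto simp: zero_less_mult_iff mult_less_cancel_left)
  have "coprime A B"
    unfolding A_def B_def g_def using assms by (intro div_gcd_coprime) simp
  then have "real_of_int B \<le> C * real_of_int (kappa A * kappa B * (B - A)) powr (1 + e)"
    using abc_inequality_coprime_gap[OF abc \<open>C > 0\<close> \<open>e \<ge> 0\<close>] \<open>A > 0\<close> \<open>A < B\<close> by blast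
  also have "\<dots> \<le> C * K powr (1 + e)"
  proof -
    have "kappa A \<le> kappa a" "kappa B \<le> kappa b"
      using assms by (auto simp: a_eq b_eq intro: kappa_le_of_dvd)
    then have "kappa A * kappa B * (B - A) \<le> kappa a * kappa b * (B - A)"
      using kappa_pos[of A] kappa_pos[of B] \<open>A < B\<close> by (intro mult_right_mono mult_mono) auto
    then have "real_of_int (kappa A * kappa B * (B - A)) \<le> K"
      unfolding K_def by linarith
    then show ?thesis
      using kappa_pos[of A] kappa_pos[of B] \<open>A < B\<close> \<open>e \<ge> 0\<close> \<open>C > 0\<close>
      by (intro mult_left_mono powr_mono2) auto
  qed
  finally have B_le: "real_of_int B \<le> C * K powr (1 + e)" .
  have "real_of_int g powr 1 \<le> real_of_int g powr (1 + e)"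
    using \<open>g > 0\<close> \<open>e \<ge> 0\<close> by (intro powr_mono) auto
  then have "real_of_int g * real_of_int B \<le> real_of_int g powr (1 + e) * (C * K powr (1 + e))"
    using B_le \<open>g > 0\<close> \<open>A > 0\<close> \<open>A < B\<close> by (intro mult_mono) auto
  also have "\<dots> = C * (real_of_int g * K) powr (1 + e)"
    using \<open>g > 0\<close> \<open>A < B\<close> kappa_pos[of a] kappa_pos[of b] by (simp add: K_def powr_mult)
  also have "real_of_int g * K = real_of_int (kappa a * kappa b * (b - a))"
  proof -
    have "b - a = g * (B - A)"
      unfolding a_eq b_eq by (simp add: right_diff_distrib)
    then show ?thesis
      unfolding K_def by (simp add: mult_ac)
  qed
  finally show ?thesis
    unfolding b_eq by simp
qed

lemma k_full_gap_lower_bound: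
  assumes abc: "abc_inequality C e" and "C > 0" "e \<ge> 0" "k \<ge> 1"
    and "k_full k a" "k_full k b" "0 < a" "a < b"
  shows "real b powr (1 / (1 + e) - 2 / real k) \<le> C powr (1 / (1 + e)) * real (b - a)"
proof -
  define Z where "Z = real_of_int (kappa (int a) * kappa (int b) * (int b - int a))"
  define Y where "Y = real b powr (2 / real k) * real (b - a)"
  have "Y \<ge> 0"
    unfolding Y_def by simp
  have "real_of_int (kappa (int a)) \<le> real a powr (1 / real k)"
    using kappa_le_root_of_k_full[of k a] assms by simp
  also have "\<dots> \<le> real b powr (1 / real k)"
    using assms by (intro powr_mono2) auto
  finally have "real_of_int (kappa (int a)) * real_of_int (kappa (int b)) * real (b - a)
      \<le> real b powr (1 / real k) * real b powr (1 / real k) * real (b - a)"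
    using kappa_le_root_of_k_full[of k b] assms kappa_pos[of "int b"]
    by (intro mult_right_mono mult_mono) auto
  also have "\<dots> = Y"
    unfolding Y_def by (simp add: powr_add[symmetric])
  finally have "Z \<le> Y"
    unfolding Z_def using assms by (simp add: of_nat_diff)
  then have "Z powr (1 + e) \<le> Y powr (1 + e)"
    unfolding Z_def using assms kappa_pos[of "int a"] kappa_pos[of "int b"]
    by (intro powr_mono2) auto
  moreover have "real b \<le> C * Z powr (1 + e)"
    using abc_inequality_gap[OF abc \<open>C > 0\<close> \<open>e \<ge> 0\<close>, of "int a" "int b"] assms
    unfolding Z_def by simp
  ultimately have "real b \<le> C * Y powr (1 + e)"
    using \<open>C > 0\<close> by (meson mult_left_mono order_trans less_imp_le)
  then have "real b powr (1 / (1 + e)) \<le> (C * Y powr (1 + e)) powr (1 / (1 + e))"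
    using \<open>e \<ge> 0\<close> by (intro powr_mono2) auto
  also have "\<dots> = C powr (1 / (1 + e)) * Y"
    using \<open>C > 0\<close> \<open>e \<ge> 0\<close> \<open>Y \<ge> 0\<close> by (simp add: powr_mult powr_powr)
  finally have "real b powr (1 / (1 + e)) \<le> C powr (1 / (1 + e)) * real (b - a) * real b powr (2 / real k)"
    unfolding Y_def by (simp add: mult_ac)
  then show ?thesis
    using assms by (simp add: powr_diff divide_le_eq)
qed

lemma card_separated_le:
  fixes S :: "real set"
  assumes "S \<subseteq> {x..x + y}" "y \<ge> 0" "\<delta> > 0"
    and sep: "\<And>s t. s \<in> S \<Longrightarrow> t \<in> S \<Longrightarrow> s < t \<Longrightarrow> \<delta> \<le> t - s"
  shows "real (card S) \<le> y / \<delta> + 1"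
proof -
  define f where "f s = \<lfloor>(s - x) / \<delta>\<rfloor>" for s
  have f_less: "f s < f t" if "s \<in> S" "t \<in> S" "s < t" for s t
  proof -
    have "1 \<le> (t - s) / \<delta>"
      using sep[OF that] \<open>\<delta> > 0\<close> by simp
    moreover have "(t - x) / \<delta> = (s - x) / \<delta> + (t - s) / \<delta>"
      by (simp add: diff_divide_distrib)
    ultimately have "(s - x) / \<delta> + 1 \<le> (t - x) / \<delta>"
      by linarith
    then have "f s + 1 \<le> f t"
      unfolding f_def by (metis floor_add_int floor_mono of_int_1)
    then show ?thesis by simp
  qed
  have "inj_on f S"
    by (rule inj_onI) (metis f_less less_irrefl linorder_neqE_linordered_idom)
  moreover have "f ` S \<subseteq> {0..\<lfloor>y / \<delta>\<rfloor>}"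
  proof
    fix m assume "m \<in> f ` S"
    then obtain s where "s \<in> S" "m = f s" by blast
    then have "0 \<le> (s - x) / \<delta>" "(s - x) / \<delta> \<le> y / \<delta>"
      using assms by (auto intro!: divide_right_mono)
    then show "m \<in> {0..\<lfloor>y / \<delta>\<rfloor>}"
      unfolding \<open>m = f s\<close> f_def by (auto intro: floor_mono)
  qed
  ultimately have "card S \<le> card {0..\<lfloor>y / \<delta>\<rfloor>}"
    by (intro card_inj_on_le) auto
  then have "real (card S) \<le> real (nat (\<lfloor>y / \<delta>\<rfloor> + 1))"
    by simp
  also have "\<dots> \<le> y / \<delta> + 1"
    using assms by (simp add: nat_le_iff)
  finally show ?thesis .
qed

lemma finite_k_full_le: "finite {n. 0 < n \<and> real n \<le> t \<and> k_full k n}"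
proof (rule finite_subset[of _ "{..nat \<lceil>t\<rceil>}"])
  show "{n. 0 < n \<and> real n \<le> t \<and> k_full k n} \<subseteq> {..nat \<lceil>t\<rceil>}"
  proof
    fix n assume "n \<in> {n. 0 < n \<and> real n \<le> t \<and> k_full k n}"
    then have "int n \<le> \<lceil>t\<rceil>"
      by (metis (mono_tags) ceiling_mono ceiling_of_nat mem_Collect_eq)
    then show "n \<in> {..nat \<lceil>t\<rceil>}" by simp
  qed
qed simp

lemma Q_diff_eq_card:
  assumes "x \<le> x'"
  shows "real (Q k x') - real (Q k x) = real (card {n. 0 < n \<and> x < real n \<and> real n \<le> x' \<and> k_full k n})"
proof -
  define T where "T = {n. 0 < n \<and> real n \<le> x \<and> k_full k n}"
  define S where "S = {n. 0 < n \<and> x < real n \<and> real n \<le> x' \<and> k_full k n}"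
  have "{n. 0 < n \<and> real n \<le> x' \<and> k_full k n} = T \<union> S"
    unfolding T_def S_def using assms by auto
  moreover have "finite T" "finite S"
    unfolding T_def S_def by (auto intro: finite_k_full_le finite_subset[OF _ finite_k_full_le])
  ultimately have "Q k x' = card T + card S"
    unfolding Q_def by (simp add: card_Un_disjoint T_def S_def disjoint_iff)
  then show ?thesis
    unfolding Q_def T_def S_def by simp
qed

lemma Q_diff_le_of_gap:
  assumes gap: "\<And>a b. k_full k a \<Longrightarrow> k_full k b \<Longrightarrow> 0 < a \<Longrightarrow> a < b \<Longrightarrow>
      real b powr \<theta> \<le> M * real (b - a)"
    and "M > 0" "\<theta> \<ge> 0" "0 < y" "y \<le> x"
  shows "real (Q k (x + y)) - real (Q k x) \<le> M * y powr (1 - \<theta>) + 1"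
proof -
  define S where "S = {n. 0 < n \<and> x < real n \<and> real n \<le> x + y \<and> k_full k n}"
  define \<delta> where "\<delta> = x powr \<theta> / M"
  have "\<delta> > 0"
    unfolding \<delta>_def using assms by simp
  have "\<delta> \<le> t - s" if st: "s \<in> real ` S" "t \<in> real ` S" "s < t" for s t
  proof -
    obtain a b where ab: "a \<in> S" "b \<in> S" "s = real a" "t = real b"
      using st by blast
    have "x powr \<theta> \<le> real b powr \<theta>"
      using ab assms unfolding S_def by (intro powr_mono2) auto
    also have "\<dots> \<le> M * real (b - a)"
      using ab st gap[of a b] unfolding S_def by auto
    finally show ?thesis
      unfolding \<delta>_def using ab st \<open>M > 0\<close> by (simp add: of_nat_diff divide_le_eq mult.commute)
  qed
  then have "real (card (real ` S)) \<le> y / \<delta> + 1"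
    using assms \<open>\<delta> > 0\<close> by (intro card_separated_le[of _ x y]) (auto simp: S_def)
  moreover have "y / \<delta> \<le> M * y powr (1 - \<theta>)"
  proof -
    have "y powr \<theta> \<le> x powr \<theta>"
      using assms by (intro powr_mono2) auto
    then have "y / \<delta> \<le> M * (y / y powr \<theta>)"
      unfolding \<delta>_def using assms by (simp add: field_simps mult_left_mono)
    then show ?thesis
      using assms by (simp add: powr_diff)
  qed
  ultimately show ?thesis
    using Q_diff_eq_card[of x "x + y" k] assms by (simp add: card_image S_def)
qed

lemma gap_exponent_bounds:
  fixes e \<epsilon> :: real
  assumes "k \<ge> 3" "0 \<le> e" "e \<le> \<epsilon> / real k" "e \<le> 1 / 2"
  shows "0 \<le> 1 / (1 + e) - 2 / real k" and "1 - (1 / (1 + e) - 2 / real k) \<le> (2 + \<epsilon>) / real k"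
proof -
  have "2 / real k \<le> 2 / 3"
    using assms by (simp add: field_simps)
  moreover have "2 / 3 \<le> 1 / (1 + e)"
    using assms by (simp add: field_simps)
  ultimately show "0 \<le> 1 / (1 + e) - 2 / real k"
    by linarith
  have "1 - 1 / (1 + e) \<le> e"
    using assms by (simp add: field_simps)
  then show "1 - (1 / (1 + e) - 2 / real k) \<le> (2 + \<epsilon>) / real k"
    using assms by (simp add: add_divide_distrib)
qed

theorem theorem4:
  fixes k :: nat and \<epsilon> :: real
  assumes "abc_conjecture" and "k \<ge> 3" and "\<epsilon> > 0"
  shows "\<exists>C::real. C > 0 \<and>
    (\<forall>x y :: real. 1 \<le> x \<and> 1 \<le> y \<and> y \<le> x \<longrightarrow>
       real (Q k (x + y)) - real (Q k x) \<le> C * y powr ((2 + \<epsilon>) / real k))"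
proof -
  define e where "e = min (\<epsilon> / real k) (1 / 2)"
  define \<theta> where "\<theta> = 1 / (1 + e) - 2 / real k"
  have "e > 0"
    unfolding e_def using assms by simp
  then obtain C where "C > 0" and abc: "abc_inequality C e"
    using assms(1) abc_conjecture_iff by blast
  define M where "M = C powr (1 / (1 + e))"
  have "M > 0"
    unfolding M_def using \<open>C > 0\<close> by simp
  have "e \<le> \<epsilon> / real k" "e \<le> 1 / 2"
    unfolding e_def by (rule min.cobounded1, rule min.cobounded2)
  then have \<theta>: "0 \<le> \<theta>" "1 - \<theta> \<le> (2 + \<epsilon>) / real k"
    unfolding \<theta>_def using gap_exponent_bounds assms(2) \<open>e > 0\<close> by simp_all
  show ?thesis
  proof (intro exI[of _ "M + 1"] conjI allI impI)
    fix x y :: real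
    assume xy: "1 \<le> x \<and> 1 \<le> y \<and> y \<le> x"
    have "real (Q k (x + y)) - real (Q k x) \<le> M * y powr (1 - \<theta>) + 1"
      using k_full_gap_lower_bound[OF abc \<open>C > 0\<close>] \<open>e > 0\<close> assms xy \<theta> \<open>M > 0\<close>
      by (intro Q_diff_le_of_gap) (auto simp: M_def \<theta>_def)
    also have "\<dots> \<le> M * y powr ((2 + \<epsilon>) / real k) + y powr ((2 + \<epsilon>) / real k)"
      using xy \<theta> \<open>M > 0\<close> assms by (intro add_mono mult_left_mono powr_mono ge_one_powr_ge_zero) auto
    finally show "real (Q k (x + y)) - real (Q k x) \<le> (M + 1) * y powr ((2 + \<epsilon>) / real k)"
      by (simp add: distrib_right)
  qed (use \<open>M > 0\<close> in simp)
qed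

end
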